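(* In the oracle setting below with $K=3$ populations (sizes $n_1,n_2,n_3$, $n=n_1+n_2+n_3$), run Algorithm BS* on $\mathcal D$, and consider the conditions (A1) $(n_2-n_1)d(\widehat P_1,\widehat P_2)+n_3\{d(\widehat P_1,\widehat P_3)-d(\widehat P_2,\widehat P_3)\}\ge 0$; (A2) $(n_3-n_1)d(\widehat P_1,\widehat P_3)+n_2\{d(\widehat P_1,\widehat P_2)-d(\widehat P_2,\widehat P_3)\}\ge 0$; (A3) $n_1(n_2+n_3-1)\{d(\widehat P_1,\widehat P_3)-d(\widehat P_1,\widehat P_2)\}+(n_3-n_2)(n_1+1)d(\widehat P_2,\widehat P_3)\ge 0$. Then: (a) In the first iteration, transferring an observation from population 1 maximizes $d_w^*(C_1^{(1)},C_2^{(1)})$ if and only if (A1) and (A2) both hold. Furthermore, if (A1) and (A2) hold (and the first transferred observation is from population 1), then in each of the first $n_1$ iterations an observation from population 1 is transferred to $C_1$, and $d_w^*(C_1^{(r)},C_2^{(r)})$ is increasing in $r$ for $r=1,\dots,n_1$. (b) Under (A1) and (A2) (with the first $n_1$ iterations transferring the observations of population 1), transferring an observation from population 2 at iteration $n_1+1$ maximizes $d_w^*(C_1^{(n_1+1)},C_2^{(n_1+1)})$ if and only if (A3) holds. Furthermore, if (A1), (A2), (A3) hold, observations from population 2 are transferred to $C_1$ at iterations $n_1+1,\dots,n_1+n_2$, and $r\mapsto d_w^*(C_1^{(r)},C_2^{(r)})$ is convex on $\{n_1,\dots,n_1+n_2\}$. (c) Under (A1), (A2), (A3), $r\mapsto d_w^*(C_1^{(r)},C_2^{(r)})$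 is decreasing for $r\ge n_1+n_2$.
   Context: Let $k$ be a characteristic kernel on a separable metric space $\mathcal X$ and, for Borel probability measures $P,Q$, $d(P,Q)=\iint k\,dP\,dP+\iint k\,dQ\,dQ-2\iint k\,dP\,dQ$ (squared MMD). Oracle setting: $\mathcal D=\mathcal D_1\cup\dots\cup\mathcal D_K$ (disjoint), $\mathcal D_i$ the $n_i$ observations from population $i$, $\widehat P_i$ the empirical distribution of $\mathcal D_i$, the $\widehat P_i$ being pairwise distinct. For nonempty $S\subseteq\mathcal D$ with $m_i=|S\cap\mathcal D_i|$, $\widetilde P_S=\sum_i\frac{m_i}{|S|}\widehat P_i$; for disjoint nonempty $S_1,S_2$, $d_w^*(S_1,S_2)=\frac{|S_1||S_2|}{|S_1|+|S_2|}d(\widetilde P_{S_1},\widetilde P_{S_2})$. Algorithm BS* on $\mathcal E$: $C_1^{(0)}=\emptyset$, $C_2^{(0)}=\mathcal E$; for $r=1,\dots,|\mathcal E|-1$ choose $c\in C_2^{(r-1)}$ maximizing $d_w^*(C_1^{(r-1)}\cup\{c\},C_2^{(r-1)}\setminus\{c\})$ and set $C_1^{(r)}=C_1^{(r-1)}\cup\{c\}$, $C_2^{(r)}=C_2^{(r-1)}\setminus\{c\}$. "An observation from population $i$ is transferred at iteration $r$" means the chosen $c$ lies in $\mathcal D_i$. *)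

theory Defs
  imports "HOL-Probability.Probability"
begin

definition mmd2 :: "('a::topological_space \<Rightarrow> 'a \<Rightarrow> real) \<Rightarrow> 'a measure \<Rightarrow> 'a measure \<Rightarrow> real" where
  "mmd2 k P Q =
     (\<integral>x. (\<integral>y. k x y \<partial>P) \<partial>P) + (\<integral>x. (\<integral>y. k x y \<partial>Q) \<partial>Q)
     - 2 * (\<integral>x. (\<integral>y. k x y \<partial>Q) \<partial>P)"

definition pd_kernel :: "('a \<Rightarrow> 'a \<Rightarrow> real) \<Rightarrow> bool" where
  "pd_kernel k \<longleftrightarrow> (\<forall>x y. k x y = k y x) \<and>
     (\<forall>(xs::'a list) (c::nat \<Rightarrow> real).
        0 \<le> (\<Sum>i<length xs. \<Sum>j<length xs. c i * c j * k (xs ! i) (xs ! j)))"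

definition characteristic_kernel :: "('a::topological_space \<Rightarrow> 'a \<Rightarrow> real) \<Rightarrow> bool" where
  "characteristic_kernel k \<longleftrightarrow> pd_kernel k \<and>
     (\<lambda>(x,y). k x y) \<in> borel_measurable borel \<and>
     bounded (range (\<lambda>(x,y). k x y)) \<and>
     (\<forall>P Q. prob_space P \<longrightarrow> prob_space Q \<longrightarrow> sets P = sets borel \<longrightarrow> sets Q = sets borel
        \<longrightarrow> mmd2 k P Q = 0 \<longrightarrow> P = Q)"

definition emp_pmf :: "('o \<Rightarrow> 'a) \<Rightarrow> 'o set \<Rightarrow> 'a pmf" where
  "emp_pmf X S = pmf_of_multiset (image_mset X (mset_set S))"

definition popset :: "('o \<Rightarrow> nat) \<Rightarrow> 'o set \<Rightarrow> nat \<Rightarrow> 'o set" where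
  "popset pop D i = {ob \<in> D. pop ob = i}"

text \<open>Oracle mixture: P~_S = sum_i (m_i/|S|) P^_i with m_i = |S \<inter> D_i|.\<close>
definition oracle_mix :: "('o \<Rightarrow> nat) \<Rightarrow> ('o \<Rightarrow> 'a) \<Rightarrow> 'o set \<Rightarrow> 'o set \<Rightarrow> 'a pmf" where
  "oracle_mix pop X D S =
     bind_pmf (pmf_of_multiset (image_mset pop (mset_set S))) (\<lambda>i. emp_pmf X (popset pop D i))"

definition dw_star :: "('a::topological_space \<Rightarrow> 'a \<Rightarrow> real) \<Rightarrow> ('o \<Rightarrow> nat) \<Rightarrow> ('o \<Rightarrow> 'a) \<Rightarrow> 'o set
     \<Rightarrow> 'o set \<Rightarrow> 'o set \<Rightarrow> real" where
  "dw_star k pop X D S1 S2 =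
     real (card S1) * real (card S2) / real (card S1 + card S2) *
     mmd2 k (measure_pmf (oracle_mix pop X D S1)) (measure_pmf (oracle_mix pop X D S2))"

text \<open>Algorithm BS*: a run is a choice sequence c (c r = observation chosen at iteration r);
  C_1^(r) = {c 1, ..., c r}, C_2^(r) = E - C_1^(r).\<close>
definition C1_of :: "(nat \<Rightarrow> 'o) \<Rightarrow> nat \<Rightarrow> 'o set" where
  "C1_of c r = c ` {1..r}"

definition maximizes_at :: "'o set \<Rightarrow> ('o set \<Rightarrow> 'o set \<Rightarrow> real) \<Rightarrow> 'o set \<Rightarrow> 'o \<Rightarrow> bool" where
  "maximizes_at E obj C x \<longleftrightarrow> x \<in> E - C \<and>
     (\<forall>y \<in> E - C. obj (insert y C) (E - insert y C) \<le> obj (insert x C) (E - insert x C))"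

definition BS_star_run :: "'o set \<Rightarrow> ('o set \<Rightarrow> 'o set \<Rightarrow> real) \<Rightarrow> (nat \<Rightarrow> 'o) \<Rightarrow> bool" where
  "BS_star_run E obj c \<longleftrightarrow> (\<forall>r \<in> {1..card E - 1}. maximizes_at E obj (C1_of c (r - 1)) (c r))"

end

theory Submission
  imports Defs
begin

text \<open>Let \<open>\<mu>\<^sub>i\<close> be the kernel mean embedding of the empirical distribution of population \<open>i\<close>
  and \<open>\<mu> = \<Sum>\<^sub>i (n\<^sub>i / n) \<mu>\<^sub>i\<close> the pooled one. If the first part of a split holds \<open>a\<^sub>i\<close> observations
  of population \<open>i\<close> and \<open>s = a\<^sub>1 + a\<^sub>2 + a\<^sub>3\<close>, the embeddings of the two oracle mixtures differ by
  \<open>n / (s (n - s)) \<Sum>\<^sub>i a\<^sub>i (\<mu>\<^sub>i - \<mu>)\<close>, so \<open>d\<^sub>w\<^sup>* = n Q(a) / (s (n - s))\<close> with the quadratic form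
  \<open>Q(a) = \<Sum>\<^sub>i\<^sub>j a\<^sub>i a\<^sub>j g\<^sub>i\<^sub>j\<close> of the centred Gram matrix \<open>g\<^sub>i\<^sub>j = \<langle>\<mu>\<^sub>i - \<mu>, \<mu>\<^sub>j - \<mu>\<rangle>\<close>.
  This matrix is positive semidefinite, satisfies \<open>\<Sum>\<^sub>i n\<^sub>i g\<^sub>i\<^sub>j = 0\<close>, and
  \<open>g\<^sub>i\<^sub>i + g\<^sub>j\<^sub>j - 2 g\<^sub>i\<^sub>j = d(P\<^sub>i, P\<^sub>j) > 0\<close>. In these coordinates (A1), (A2), (A3) read
  \<open>g\<^sub>2\<^sub>2 \<le> g\<^sub>1\<^sub>1\<close>, \<open>g\<^sub>3\<^sub>3 \<le> g\<^sub>1\<^sub>1\<close> and \<open>2 n\<^sub>1 (g\<^sub>1\<^sub>2 - g\<^sub>1\<^sub>3) + g\<^sub>2\<^sub>2 - g\<^sub>3\<^sub>3 \<ge> 0\<close>. A greedy step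
  compares splits of equal size, hence only values of \<open>Q\<close>, and each claim becomes the sign of a
  quadratic expression in the \<open>g\<^sub>i\<^sub>j\<close> that these three facts determine.\<close>

section \<open>Elementary inequalities\<close>

lemma nonneg_quadratic_linear_coeff_zero:
  fixes a b :: real
  assumes "0 \<le> a" and nonneg: "\<And>t. 0 \<le> a * t\<^sup>2 + 2 * b * t"
  shows "b = 0"
proof (rule ccontr)
  assume "b \<noteq> 0"
  define t where "t = - b / (a + 1)"
  have t: "t * (a + 1) = - b" unfolding t_def using \<open>0 \<le> a\<close> by simp
  have "(a + 1)\<^sup>2 * (a * t\<^sup>2 + 2 * b * t) = a * (t * (a + 1))\<^sup>2 + 2 * b * (t * (a + 1)) * (a + 1)"
    by algebra
  also have "\<dots> = - (b\<^sup>2 * (a + 2))" unfolding t by algebra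
  finally have "(a + 1)\<^sup>2 * (a * t\<^sup>2 + 2 * b * t) = - (b\<^sup>2 * (a + 2))" .
  moreover have "0 < b\<^sup>2 * (a + 2)" "0 < (a + 1)\<^sup>2"
    using \<open>b \<noteq> 0\<close> \<open>0 \<le> a\<close> by simp_all
  ultimately have "a * t\<^sup>2 + 2 * b * t < 0"
    by (smt (verit) mult_nonneg_nonneg)
  then show False using nonneg[of t] by linarith
qed

lemma inverse_midpoint_convex:
  fixes x :: real
  assumes "2 \<le> x"
  shows "2 * (1 / x) \<le> 1 / (x - 1) + 1 / (x + 1)"
proof -
  have "1 / (x - 1) + 1 / (x + 1) = 2 * x / (x * x - 1)"
    using assms by (simp add: field_simps)
  moreover have "4 \<le> x * x" using mult_mono[of 2 x 2 x] assms by simp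
  ultimately show ?thesis using assms by (simp add: field_simps)
qed

lemma quadratic_ratio_midpoint_convex:
  fixes q :: "real \<Rightarrow> real" and A B C N s :: real
  assumes q: "\<And>x. q x = A * x\<^sup>2 + B * x + C" and "0 \<le> C" "0 \<le> q N"
    and s: "2 \<le> s" "s + 2 \<le> N"
  shows "2 * (q s / (s * (N - s)))
    \<le> q (s - 1) / ((s - 1) * (N - (s - 1))) + q (s + 1) / ((s + 1) * (N - (s + 1)))"
proof -
  have partial_fractions: "q x / (x * (N - x)) = - A + C / N * (1 / x) + q N / N * (1 / (N - x))"
    if "0 < x" "x < N" for x
    using that unfolding q by (simp add: field_simps power2_eq_square)
  have "0 \<le> C / N" "0 \<le> q N / N" using assms by simp_all
  then have "2 * (C / N * (1 / s)) \<le> C / N * (1 / (s - 1)) + C / N * (1 / (s + 1))"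
    and "2 * (q N / N * (1 / (N - s)))
      \<le> q N / N * (1 / (N - (s - 1))) + q N / N * (1 / (N - (s + 1)))"
    using mult_left_mono[OF inverse_midpoint_convex[of s], of "C / N"]
      mult_left_mono[OF inverse_midpoint_convex[of "N - s"], of "q N / N"] s
    by (simp_all add: algebra_simps)
  then show ?thesis
    using partial_fractions[of s] partial_fractions[of "s - 1"] partial_fractions[of "s + 1"] s
    by simp
qed

section \<open>The centred Gram matrix of three populations\<close>

text \<open>\<open>Kij\<close> models the inner product of the kernel mean embeddings of populations \<open>i\<close> and \<open>j\<close>;
  \<open>gij\<close> is the same inner product after centring the embeddings at their pooled mean.\<close>
locale three_population_gram =
  fixes n1 n2 n3 K11 K12 K13 K22 K23 K33 :: real
  assumes sizes_ge_1: "1 \<le> n1" "1 \<le> n2" "1 \<le> n3"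
    and gram_psd: "\<And>u1 u2 u3. 0 \<le> u1 * u1 * K11 + u2 * u2 * K22 + u3 * u3 * K33
      + 2 * u1 * u2 * K12 + 2 * u1 * u3 * K13 + 2 * u2 * u3 * K23"
    and gram_dist_pos: "0 < K11 + K22 - 2 * K12" "0 < K11 + K33 - 2 * K13" "0 < K22 + K33 - 2 * K23"
begin

definition "gram_form u1 u2 u3 v1 v2 v3 = u1 * v1 * K11 + u2 * v2 * K22 + u3 * v3 * K33
  + (u1 * v2 + u2 * v1) * K12 + (u1 * v3 + u3 * v1) * K13 + (u2 * v3 + u3 * v2) * K23"

definition "ntot = n1 + n2 + n3"
definition "p1 = n1 / ntot"
definition "p2 = n2 / ntot"
definition "p3 = n3 / ntot"

definition "g11 = gram_form (1 - p1) (- p2) (- p3) (1 - p1) (- p2) (- p3)"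
definition "g22 = gram_form (- p1) (1 - p2) (- p3) (- p1) (1 - p2) (- p3)"
definition "g33 = gram_form (- p1) (- p2) (1 - p3) (- p1) (- p2) (1 - p3)"
definition "g12 = gram_form (1 - p1) (- p2) (- p3) (- p1) (1 - p2) (- p3)"
definition "g13 = gram_form (1 - p1) (- p2) (- p3) (- p1) (- p2) (1 - p3)"
definition "g23 = gram_form (- p1) (1 - p2) (- p3) (- p1) (- p2) (1 - p3)"

lemmas centred_gram_defs = g11_def g12_def g13_def g22_def g23_def g33_def gram_form_def

definition "d12 = K11 + K22 - 2 * K12"
definition "d13 = K11 + K33 - 2 * K13"
definition "d23 = K22 + K33 - 2 * K23"

definition "centred_quad a1 a2 a3 = a1 * a1 * g11 + a2 * a2 * g22 + a3 * a3 * g33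
  + 2 * a1 * a2 * g12 + 2 * a1 * a3 * g13 + 2 * a2 * a3 * g23"

text \<open>The value of \<open>d\<^sub>w\<^sup>*\<close> for a split whose first part holds \<open>ai\<close> observations of population \<open>i\<close>.\<close>
definition "objective a1 a2 a3 =
  ntot * centred_quad a1 a2 a3 / ((a1 + a2 + a3) * (ntot - (a1 + a2 + a3)))"

definition "delta = 2 * n1 * (g12 - g13) + g22 - g33"

lemma ntot_ge_3: "3 \<le> ntot"
  using sizes_ge_1 by (simp add: ntot_def)

lemma ntot_pos: "0 < ntot"
  using ntot_ge_3 by simp

lemma gram_form_nonneg: "0 \<le> gram_form u1 u2 u3 u1 u2 u3"
  using gram_psd[of u1 u2 u3] unfolding gram_form_def by (simp add: algebra_simps)

lemma gram_form_scale:
  "gram_form (c * x1) (c * x2) (c * x3) (e * y1) (e * y2) (e * y3) = c * e * gram_form x1 x2 x3 y1 y2 y3"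
  unfolding gram_form_def by algebra

lemma centred_quad_eq_gram_form:
  fixes a1 a2 a3 :: real
  defines "s \<equiv> a1 + a2 + a3"
  shows "centred_quad a1 a2 a3
    = gram_form (a1 - s * p1) (a2 - s * p2) (a3 - s * p3) (a1 - s * p1) (a2 - s * p2) (a3 - s * p3)"
  unfolding centred_quad_def centred_gram_defs s_def by algebra

lemma centred_quad_nonneg: "0 \<le> centred_quad a1 a2 a3"
  unfolding centred_quad_eq_gram_form by (rule gram_form_nonneg)

lemma centred_diag_nonneg: "0 \<le> g11" "0 \<le> g22" "0 \<le> g33"
  using centred_quad_nonneg[of 1 0 0] centred_quad_nonneg[of 0 1 0] centred_quad_nonneg[of 0 0 1]
  by (simp_all add: centred_quad_def)

lemma d_eq_centred: "d12 = g11 + g22 - 2 * g12" "d13 = g11 + g33 - 2 * g13" "d23 = g22 + g33 - 2 * g23"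
  unfolding d12_def d13_def d23_def centred_gram_defs by algebra+

lemma d_pos: "0 < d12" "0 < d13" "0 < d23"
  using gram_dist_pos unfolding d12_def d13_def d23_def by simp_all

lemma centring:
  "n1 * g11 + n2 * g12 + n3 * g13 = 0"
  "n1 * g12 + n2 * g22 + n3 * g23 = 0"
  "n1 * g13 + n2 * g23 + n3 * g33 = 0"
proof -
  have p_sum: "p1 + p2 + p3 = 1"
    using ntot_pos unfolding p1_def p2_def p3_def by (simp add: ntot_def flip: add_divide_distrib)
  have scale: "n1 * x + n2 * y + n3 * z = ntot * (p1 * x + p2 * y + p3 * z)" for x y z
    using ntot_pos unfolding p1_def p2_def p3_def by (simp add: field_simps)
  have "p1 * g11 + p2 * g12 + p3 * g13 = 0" using p_sum unfolding centred_gram_defs by algebra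
  then show "n1 * g11 + n2 * g12 + n3 * g13 = 0" unfolding scale by simp
  have "p1 * g12 + p2 * g22 + p3 * g23 = 0" using p_sum unfolding centred_gram_defs by algebra
  then show "n1 * g12 + n2 * g22 + n3 * g23 = 0" unfolding scale by simp
  have "p1 * g13 + p2 * g23 + p3 * g33 = 0" using p_sum unfolding centred_gram_defs by algebra
  then show "n1 * g13 + n2 * g23 + n3 * g33 = 0" unfolding scale by simp
qed

lemma criterion1_eq: "(n2 - n1) * d12 + n3 * (d13 - d23) = ntot * (g11 - g22)"
proof -
  have "(n2 - n1) * d12 + n3 * (d13 - d23) - ntot * (g11 - g22)
    = 2 * (n1 * g12 + n2 * g22 + n3 * g23) - 2 * (n1 * g11 + n2 * g12 + n3 * g13)"
    unfolding d_eq_centred ntot_def by algebra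
  then show ?thesis using centring by simp
qed

lemma criterion2_eq: "(n3 - n1) * d13 + n2 * (d12 - d23) = ntot * (g11 - g33)"
proof -
  have "(n3 - n1) * d13 + n2 * (d12 - d23) - ntot * (g11 - g33)
    = 2 * (n1 * g13 + n2 * g23 + n3 * g33) - 2 * (n1 * g11 + n2 * g12 + n3 * g13)"
    unfolding d_eq_centred ntot_def by algebra
  then show ?thesis using centring by simp
qed

lemma criterion3_eq: "n1 * (n2 + n3 - 1) * (d13 - d12) + (n3 - n2) * (n1 + 1) * d23 = ntot * delta"
proof -
  have "n1 * (n2 + n3 - 1) * (d13 - d12) + (n3 - n2) * (n1 + 1) * d23 - ntot * delta
    = (2 + 2 * n1) * (n1 * g13 + n2 * g23 + n3 * g33) - (2 + 2 * n1) * (n1 * g12 + n2 * g22 + n3 * g23)"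
    unfolding d_eq_centred ntot_def delta_def by algebra
  then show ?thesis using centring by simp
qed

lemma criterion1_iff: "0 \<le> (n2 - n1) * d12 + n3 * (d13 - d23) \<longleftrightarrow> g22 \<le> g11"
proof -
  have "0 \<le> ntot * (g11 - g22) \<longleftrightarrow> g22 \<le> g11" using ntot_pos by (simp add: zero_le_mult_iff)
  then show ?thesis by (simp only: criterion1_eq)
qed

lemma criterion2_iff: "0 \<le> (n3 - n1) * d13 + n2 * (d12 - d23) \<longleftrightarrow> g33 \<le> g11"
proof -
  have "0 \<le> ntot * (g11 - g33) \<longleftrightarrow> g33 \<le> g11" using ntot_pos by (simp add: zero_le_mult_iff)
  then show ?thesis by (simp only: criterion2_eq)
qed

lemma criterion3_iff: "0 \<le> n1 * (n2 + n3 - 1) * (d13 - d12) + (n3 - n2) * (n1 + 1) * d23 \<longleftrightarrow> 0 \<le> delta"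
proof -
  have "0 \<le> ntot * delta \<longleftrightarrow> 0 \<le> delta" using ntot_pos by (simp add: zero_le_mult_iff)
  then show ?thesis by (simp only: criterion3_eq)
qed

lemma objective_le_same_size_iff:
  assumes "a1 + a2 + a3 = b1 + b2 + b3" "0 < a1 + a2 + a3" "a1 + a2 + a3 < ntot"
  shows "objective a1 a2 a3 \<le> objective b1 b2 b3 \<longleftrightarrow> centred_quad a1 a2 a3 \<le> centred_quad b1 b2 b3"
proof -
  have "0 < (b1 + b2 + b3) * (ntot - (b1 + b2 + b3))" using assms by simp
  then show ?thesis using ntot_pos unfolding objective_def assms(1)
    by (simp add: divide_le_cancel mult_le_cancel_left_pos)
qed

lemma objective_less_same_size_iff:
  assumes "a1 + a2 + a3 = b1 + b2 + b3" "0 < a1 + a2 + a3" "a1 + a2 + a3 < ntot"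
  shows "objective a1 a2 a3 < objective b1 b2 b3 \<longleftrightarrow> centred_quad a1 a2 a3 < centred_quad b1 b2 b3"
proof -
  have "0 < (b1 + b2 + b3) * (ntot - (b1 + b2 + b3))" "b1 + b2 + b3 \<noteq> 0" "ntot \<noteq> b1 + b2 + b3"
    using assms by auto
  then show ?thesis using ntot_pos unfolding objective_def assms(1)
    by (simp add: divide_less_cancel mult_less_cancel_left_pos)
qed

lemma objective_first_step_iff:
  "objective 0 1 0 \<le> objective 1 0 0 \<longleftrightarrow> g22 \<le> g11"
  "objective 0 0 1 \<le> objective 1 0 0 \<longleftrightarrow> g33 \<le> g11"
  using objective_le_same_size_iff[of 0 1 0 1 0 0] objective_le_same_size_iff[of 0 0 1 1 0 0] ntot_ge_3
  by (simp_all add: centred_quad_def)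

lemma objective_pop1_beats_others:
  assumes "g22 \<le> g11" "g33 \<le> g11" "1 \<le> r" "r + 1 < ntot"
  shows "objective r 1 0 < objective (r + 1) 0 0" "objective r 0 1 < objective (r + 1) 0 0"
proof -
  have "centred_quad (r + 1) 0 0 - centred_quad r 1 0 = r * d12 + (r + 1) * (g11 - g22)"
    "centred_quad (r + 1) 0 0 - centred_quad r 0 1 = r * d13 + (r + 1) * (g11 - g33)"
    unfolding centred_quad_def d_eq_centred by algebra+
  moreover have "0 < r * d12" "0 < r * d13" "0 \<le> (r + 1) * (g11 - g22)" "0 \<le> (r + 1) * (g11 - g33)"
    using assms d_pos by simp_all
  ultimately have "centred_quad r 1 0 < centred_quad (r + 1) 0 0"
    "centred_quad r 0 1 < centred_quad (r + 1) 0 0"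
    by linarith+
  then show "objective r 1 0 < objective (r + 1) 0 0" "objective r 0 1 < objective (r + 1) 0 0"
    using objective_less_same_size_iff[of r 1 0 "r + 1" 0 0]
      objective_less_same_size_iff[of r 0 1 "r + 1" 0 0] assms
    by simp_all
qed

lemma g11_pos:
  assumes "g22 \<le> g11"
  shows "0 < g11"
proof (rule ccontr)
  assume "\<not> 0 < g11"
  then have "g11 = 0" "g22 = 0" using centred_diag_nonneg assms by linarith+
  moreover have "0 \<le> centred_quad 1 1 0" by (rule centred_quad_nonneg)
  ultimately show False using d_pos(1) d_eq_centred(1) by (simp add: centred_quad_def)
qed

lemma objective_pop1_increasing:
  assumes "0 < g11" "1 \<le> r" "r + 1 < ntot"
  shows "objective r 0 0 < objective (r + 1) 0 0"
proof -
  have objective_pop1: "objective x 0 0 = ntot * g11 * (x / (ntot - x))" if "0 < x" "x < ntot" for x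
    using that unfolding objective_def centred_quad_def by (simp add: field_simps)
  have "r / (ntot - r) < (r + 1) / (ntot - (r + 1))"
    using assms by (simp add: field_simps)
  then have "ntot * g11 * (r / (ntot - r)) < ntot * g11 * ((r + 1) / (ntot - (r + 1)))"
    using assms ntot_pos by (intro mult_strict_left_mono) auto
  then show ?thesis using objective_pop1[of r] objective_pop1[of "r + 1"] assms by simp
qed

lemma centred_quad_pop2_gain:
  "centred_quad n1 (j + 1) 0 - centred_quad n1 j 1 = delta + 2 * j * (g22 - g23)"
  unfolding centred_quad_def delta_def by algebra

lemma objective_phase2_start_iff: "objective n1 0 1 \<le> objective n1 1 0 \<longleftrightarrow> 0 \<le> delta"
proof -
  have "centred_quad n1 1 0 - centred_quad n1 0 1 = delta"
    using centred_quad_pop2_gain[of 0] by simp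
  then have "centred_quad n1 0 1 \<le> centred_quad n1 1 0 \<longleftrightarrow> 0 \<le> delta" by arith
  then show ?thesis
    using objective_le_same_size_iff[of n1 0 1 n1 1 0] sizes_ge_1 by (simp add: ntot_def)
qed

text \<open>The margin is affine in \<open>j\<close>; if it decreases, it is still positive at \<open>j = n2 - 1\<close>, where
  centring turns it into a positive combination of \<open>g33 - g23\<close> and \<open>g33 - g22\<close>.\<close>
lemma pop2_margin_pos:
  assumes "0 \<le> delta" "1 \<le> j" "j \<le> n2 - 1"
  shows "0 < delta + 2 * j * (g22 - g23)"
proof (cases "g23 < g22")
  case True
  then show ?thesis using assms by (simp add: add_nonneg_pos)
next
  case False
  have "delta + 2 * (n2 - 1) * (g22 - g23) - ((2 * n3 - 2) * (g33 - g23) + (g33 - g22))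
    = 2 * (n1 * g12 + n2 * g22 + n3 * g23) - 2 * (n1 * g13 + n2 * g23 + n3 * g33)"
    unfolding delta_def by algebra
  then have last: "delta + 2 * (n2 - 1) * (g22 - g23) = (2 * n3 - 2) * (g33 - g23) + (g33 - g22)"
    using centring by simp
  have "0 < g33 - g23" "0 < g33 - g22" using d_eq_centred(3) d_pos(3) False by linarith+
  then have "0 < delta + 2 * (n2 - 1) * (g22 - g23)"
    unfolding last using sizes_ge_1 by (smt (verit) mult_nonneg_nonneg)
  moreover have "0 \<le> 2 * (j - (n2 - 1)) * (g22 - g23)"
    using False assms by (simp add: mult_nonpos_nonpos)
  ultimately show ?thesis by (simp add: algebra_simps)
qed

lemma objective_pop2_beats_pop3:
  assumes "0 \<le> delta" "1 \<le> j" "j \<le> n2 - 1"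
  shows "objective n1 j 1 < objective n1 (j + 1) 0"
proof -
  have "centred_quad n1 j 1 < centred_quad n1 (j + 1) 0"
    using centred_quad_pop2_gain[of j] pop2_margin_pos[OF assms] by simp
  then show ?thesis
    using objective_less_same_size_iff[of n1 j 1 n1 "j + 1" 0] assms sizes_ge_1
    by (simp add: ntot_def)
qed

lemma objective_pop2_midpoint_convex:
  assumes "1 \<le> j" "j + 1 \<le> n2"
  shows "2 * objective n1 j 0 \<le> objective n1 (j - 1) 0 + objective n1 (j + 1) 0"
proof -
  define q where "q x = centred_quad n1 (x - n1) 0" for x
  have q: "q x = g22 * x\<^sup>2 + (2 * n1 * g12 - 2 * n1 * g22) * x + n1\<^sup>2 * d12" for x
    unfolding q_def centred_quad_def d_eq_centred by algebra
  have objective_q: "objective n1 (x - n1) 0 = ntot * (q x / (x * (ntot - x)))" for x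
    unfolding objective_def q_def by simp
  define quot where "quot x = q x / (x * (ntot - x))" for x
  have "0 \<le> n1\<^sup>2 * d12" using d_pos by simp
  moreover have "0 \<le> q ntot" unfolding q_def by (rule centred_quad_nonneg)
  ultimately have "2 * quot (n1 + j) \<le> quot (n1 + j - 1) + quot (n1 + j + 1)"
    unfolding quot_def using quadratic_ratio_midpoint_convex[OF q, of ntot "n1 + j"] assms sizes_ge_1
    by (simp add: ntot_def diff_add_eq)
  then have "ntot * (2 * quot (n1 + j)) \<le> ntot * (quot (n1 + j - 1) + quot (n1 + j + 1))"
    using ntot_pos by (intro mult_left_mono) auto
  then have "2 * (ntot * quot (n1 + j)) \<le> ntot * quot (n1 + j - 1) + ntot * quot (n1 + j + 1)"
    by (metis distrib_left mult.left_commute)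
  moreover have "objective n1 j 0 = ntot * quot (n1 + j)"
    using objective_q[of "n1 + j"] unfolding quot_def by simp
  moreover have "objective n1 (j - 1) 0 = ntot * quot (n1 + j - 1)"
    using objective_q[of "n1 + j - 1"] unfolding quot_def by simp
  moreover have "objective n1 (j + 1) 0 = ntot * quot (n1 + j + 1)"
    using objective_q[of "n1 + j + 1"] unfolding quot_def by (simp add: add.assoc)
  ultimately show ?thesis by simp
qed

lemma g33_pos:
  assumes "0 \<le> delta"
  shows "0 < g33"
proof (rule ccontr)
  assume "\<not> 0 < g33"
  then have g33: "g33 = 0" using centred_diag_nonneg by linarith
  have "g13 = 0"
  proof (rule nonneg_quadratic_linear_coeff_zero)
    show "0 \<le> g11" by (rule centred_diag_nonneg)
    show "0 \<le> g11 * t\<^sup>2 + 2 * g13 * t" for t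
      using centred_quad_nonneg[of t 0 1] g33 by (simp add: centred_quad_def power2_eq_square mult_ac)
  qed
  have "g23 = 0"
  proof (rule nonneg_quadratic_linear_coeff_zero)
    show "0 \<le> g22" by (rule centred_diag_nonneg)
    show "0 \<le> g22 * t\<^sup>2 + 2 * g23 * t" for t
      using centred_quad_nonneg[of 0 t 1] g33 by (simp add: centred_quad_def power2_eq_square mult_ac)
  qed
  have "n1 * g12 = - n2 * g22" using centring(2) \<open>g23 = 0\<close> by simp
  then have "delta = (1 - 2 * n2) * g22"
    unfolding delta_def using \<open>g13 = 0\<close> g33 by (simp add: algebra_simps)
  then have "g22 \<le> 0"
    using assms sizes_ge_1 by (auto simp: zero_le_mult_iff)
  then have "g22 = 0" using centred_diag_nonneg by simp
  then show False using d_eq_centred(3) d_pos(3) g33 \<open>g23 = 0\<close> by simp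
qed

lemma centred_quad_pops12_complete: "centred_quad n1 n2 m = (n3 - m)\<^sup>2 * g33"
proof -
  have "centred_quad n1 n2 m - (n3 - m)\<^sup>2 * g33
    = n1 * (n1 * g11 + n2 * g12 + n3 * g13) + n2 * (n1 * g12 + n2 * g22 + n3 * g23)
      + (2 * m - n3) * (n1 * g13 + n2 * g23 + n3 * g33)"
    unfolding centred_quad_def by algebra
  then show ?thesis using centring by simp
qed

lemma objective_pop3_decreasing:
  assumes "0 < g33" "0 \<le> m" "m + 1 < n3"
  shows "objective n1 n2 (m + 1) < objective n1 n2 m"
proof -
  have objective_pop3: "objective n1 n2 x = ntot * g33 * ((n3 - x) / (n1 + n2 + x))"
    if "0 \<le> x" "x < n3" for x
  proof -
    have rest: "ntot - (n1 + n2 + x) = n3 - x" by (simp add: ntot_def)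
    have "n3 - x \<noteq> 0" using that by simp
    then show ?thesis
      unfolding objective_def centred_quad_pops12_complete rest
      by (simp add: power2_eq_square mult.assoc mult.left_commute)
  qed
  have "(n3 - (m + 1)) / (n1 + n2 + (m + 1)) < (n3 - m) / (n1 + n2 + m)"
    using assms sizes_ge_1 by (simp add: field_simps)
  then have "ntot * g33 * ((n3 - (m + 1)) / (n1 + n2 + (m + 1))) < ntot * g33 * ((n3 - m) / (n1 + n2 + m))"
    using assms ntot_pos by (intro mult_strict_left_mono) auto
  then show ?thesis using objective_pop3[of m] objective_pop3[of "m + 1"] assms by simp
qed

text \<open>The left-hand side is \<open>d\<^sub>w\<^sup>*\<close> of a split with counts \<open>ai\<close> and \<open>ni - ai\<close>, written in the
  coordinates of the Gram matrix \<open>K\<close>.\<close>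
lemma objective_eq_weighted_mmd:
  fixes a1 a2 a3 :: real
  defines "s \<equiv> a1 + a2 + a3"
  assumes "0 < s" "s < ntot"
  shows "s * (ntot - s) / ntot *
      (gram_form a1 a2 a3 a1 a2 a3 / s\<^sup>2
       + gram_form (n1 - a1) (n2 - a2) (n3 - a3) (n1 - a1) (n2 - a2) (n3 - a3) / (ntot - s)\<^sup>2
       - 2 * gram_form a1 a2 a3 (n1 - a1) (n2 - a2) (n3 - a3) / (s * (ntot - s)))
    = objective a1 a2 a3"
proof -
  define t where "t = ntot - s"
  define c where "c = ntot / (s * t)"
  have "0 < t" using assms unfolding t_def by simp
  have diff: "a / s - (ni - a) / t = c * (a - s * (ni / ntot))" for a ni
    using \<open>0 < s\<close> \<open>0 < t\<close> ntot_pos unfolding c_def t_def by (simp add: field_simps)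
  have "gram_form a1 a2 a3 a1 a2 a3 / s\<^sup>2
      + gram_form (n1 - a1) (n2 - a2) (n3 - a3) (n1 - a1) (n2 - a2) (n3 - a3) / t\<^sup>2
      - 2 * gram_form a1 a2 a3 (n1 - a1) (n2 - a2) (n3 - a3) / (s * t)
    = gram_form (a1 / s - (n1 - a1) / t) (a2 / s - (n2 - a2) / t) (a3 / s - (n3 - a3) / t)
        (a1 / s - (n1 - a1) / t) (a2 / s - (n2 - a2) / t) (a3 / s - (n3 - a3) / t)"
    unfolding gram_form_def divide_inverse power2_eq_square inverse_mult_distrib by algebra
  also have "\<dots> = c * c * centred_quad a1 a2 a3"
    unfolding diff gram_form_scale centred_quad_eq_gram_form s_def[symmetric] p1_def p2_def p3_def ..
  finally show ?thesis
    unfolding t_def[symmetric] objective_def s_def[symmetric] c_def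
    using \<open>0 < s\<close> \<open>0 < t\<close> ntot_pos by (simp add: field_simps power2_eq_square)
qed

end

section \<open>Empirical distributions and oracle mixtures\<close>

lemma emp_pmf_eq_map_pmf_of_set:
  "finite S \<Longrightarrow> S \<noteq> {} \<Longrightarrow> emp_pmf X S = map_pmf X (pmf_of_set S)"
  unfolding emp_pmf_def by (simp add: map_pmf_of_set)

lemma set_pmf_emp_pmf: "finite S \<Longrightarrow> S \<noteq> {} \<Longrightarrow> set_pmf (emp_pmf X S) = X ` S"
  by (simp add: emp_pmf_eq_map_pmf_of_set)

lemma integral_emp_pmf:
  fixes h :: "'a \<Rightarrow> real"
  assumes "finite S" "S \<noteq> {}"
  shows "(\<integral>x. h x \<partial>measure_pmf (emp_pmf X S)) = (\<Sum>ob\<in>S. h (X ob)) / real (card S)"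
  using assms by (simp add: emp_pmf_eq_map_pmf_of_set integral_pmf_of_set)

lemma oracle_mix_eq_bind_pmf:
  assumes "finite S" "S \<noteq> {}"
  shows "oracle_mix pop X D S = bind_pmf (pmf_of_set S) (\<lambda>ob. emp_pmf X (popset pop D (pop ob)))"
  unfolding oracle_mix_def map_pmf_of_set[OF assms, symmetric] bind_map_pmf by simp

lemma integral_oracle_mix:
  fixes h :: "'a \<Rightarrow> real"
  assumes "finite S" "S \<noteq> {}"
    and popsets: "\<And>ob. ob \<in> S \<Longrightarrow> finite (popset pop D (pop ob)) \<and> popset pop D (pop ob) \<noteq> {}"
  shows "(\<integral>x. h x \<partial>measure_pmf (oracle_mix pop X D S))
    = (\<Sum>ob\<in>S. \<integral>x. h x \<partial>measure_pmf (emp_pmf X (popset pop D (pop ob)))) / real (card S)"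
proof -
  have "measure_pmf.expectation (bind_pmf (pmf_of_set S) (\<lambda>ob. emp_pmf X (popset pop D (pop ob)))) h
     = (\<Sum>ob\<in>S. measure_pmf.expectation (emp_pmf X (popset pop D (pop ob))) h /\<^sub>R real (card S))"
    using assms by (intro pmf_expectation_bind_pmf_of_set) (auto simp: set_pmf_emp_pmf)
  then show ?thesis unfolding oracle_mix_eq_bind_pmf[OF assms(1,2)]
    by (simp add: sum_divide_distrib divide_inverse_commute sum_distrib_left)
qed

lemma borel_measurable_kernel_sections:
  fixes k :: "'a::topological_space \<Rightarrow> 'a \<Rightarrow> real"
  assumes "(\<lambda>(x, y). k x y) \<in> borel_measurable borel"
  shows "(\<lambda>y. k x y) \<in> borel_measurable borel" "(\<lambda>y. k y x) \<in> borel_measurable borel"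
proof -
  have "(\<lambda>y. (x, y)) \<in> borel_measurable borel" "(\<lambda>y. (y, x)) \<in> borel_measurable borel"
    by (auto intro!: borel_measurable_continuous_onI continuous_intros)
  from this[THEN measurable_compose, OF assms]
  show "(\<lambda>y. k x y) \<in> borel_measurable borel" "(\<lambda>y. k y x) \<in> borel_measurable borel"
    by simp_all
qed

text \<open>A characteristic kernel separates Borel measures only, while \<open>measure_pmf\<close> lives on the
  power set; the push-forward along \<open>id\<close> to the Borel sets bridges the two.\<close>
lemma mmd2_distr_borel_pmf:
  fixes k :: "'a::topological_space \<Rightarrow> 'a \<Rightarrow> real"
  assumes k: "(\<lambda>(x, y). k x y) \<in> borel_measurable borel"
    and "finite (set_pmf p)" "finite (set_pmf q)"
  shows "mmd2 k (distr (measure_pmf p) borel id) (distr (measure_pmf q) borel id)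
    = mmd2 k (measure_pmf p) (measure_pmf q)"
proof -
  note sections = borel_measurable_kernel_sections[OF k]
  have integral_distr_id: "integral\<^sup>L (distr (measure_pmf r) borel id) f = integral\<^sup>L (measure_pmf r) f"
    if "f \<in> borel_measurable borel" for r and f :: "'a \<Rightarrow> real"
    using integral_distr[of id "measure_pmf r" borel f] that by simp
  have inner_measurable: "(\<lambda>x. \<integral>y. k x y \<partial>measure_pmf r) \<in> borel_measurable borel"
    if "finite (set_pmf r)" for r
  proof -
    have "(\<lambda>x. \<integral>y. k x y \<partial>measure_pmf r) = (\<lambda>x. \<Sum>y\<in>set_pmf r. k x y * pmf r y)"
      using that by (simp add: integral_measure_pmf_real)
    moreover have "(\<lambda>x. \<Sum>y\<in>set_pmf r. k x y * pmf r y) \<in> borel_measurable borel"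
      using sections(2) by (intro borel_measurable_sum borel_measurable_times) auto
    ultimately show ?thesis by simp
  qed
  have double_integral: "(\<integral>x. (\<integral>y. k x y \<partial>distr (measure_pmf b) borel id) \<partial>distr (measure_pmf a) borel id)
    = (\<integral>x. (\<integral>y. k x y \<partial>measure_pmf b) \<partial>measure_pmf a)"
    if "finite (set_pmf b)" for a b
    using integral_distr_id[OF inner_measurable[OF that]] integral_distr_id[OF sections(1)] by simp
  show ?thesis
    unfolding mmd2_def double_integral[OF assms(2)] double_integral[OF assms(3)] ..
qed

lemma characteristic_kernel_pmf_eq:
  fixes k :: "'a::metric_space \<Rightarrow> 'a \<Rightarrow> real"
  assumes char: "characteristic_kernel k" and "finite (set_pmf p)" "finite (set_pmf q)"
    and "mmd2 k (measure_pmf p) (measure_pmf q) = 0"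
  shows "p = q"
proof (rule pmf_eqI)
  let ?P = "\<lambda>r. distr (measure_pmf r) borel id"
  have "(\<lambda>(x, y). k x y) \<in> borel_measurable borel"
    using char unfolding characteristic_kernel_def by blast
  from mmd2_distr_borel_pmf[OF this assms(2,3)] have "mmd2 k (?P p) (?P q) = 0"
    using assms(4) by simp
  moreover have "prob_space (?P r)" for r
    by (rule measure_pmf.prob_space_distr) simp
  ultimately have "?P p = ?P q"
    using char unfolding characteristic_kernel_def by (metis sets_distr)
  moreover have "measure (?P r) {x} = pmf r x" for r :: "'a pmf" and x
    by (subst measure_distr) (auto simp: measure_pmf_single)
  ultimately show "pmf p x = pmf q x" for x by metis
qed

lemma pd_kernel_double_sum_nonneg:
  assumes "pd_kernel k" "finite S"
  shows "0 \<le> (\<Sum>p\<in>S. \<Sum>q\<in>S. c p * c q * k (X p) (X q))"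
proof -
  obtain L where L: "set L = S" "distinct L" using finite_distinct_list[OF assms(2)] by blast
  have bij: "bij_betw ((!) L) {..<length L} S" using bij_betw_nth[OF L(2) refl] L(1) by simp
  have "0 \<le> (\<Sum>i<length xs. \<Sum>j<length xs. c' i * c' j * k (xs ! i) (xs ! j))" for xs c'
    using assms(1) unfolding pd_kernel_def by blast
  then have "0 \<le> (\<Sum>i<length (map X L). \<Sum>j<length (map X L).
      c (L ! i) * c (L ! j) * k (map X L ! i) (map X L ! j))" .
  also have "\<dots> = (\<Sum>i<length L. \<Sum>j<length L. c (L ! i) * c (L ! j) * k (X (L ! i)) (X (L ! j)))"
    by simp
  also have "\<dots> = (\<Sum>p\<in>S. \<Sum>q\<in>S. c p * c q * k (X p) (X q))"
    using sum.reindex_bij_betw[OF bij, of "\<lambda>p. \<Sum>j<length L. c p * c (L ! j) * k (X p) (X (L ! j))"]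
      sum.reindex_bij_betw[OF bij, of "\<lambda>q. c _ * c q * k (X _) (X q)"]
    by simp
  finally show ?thesis .
qed

section \<open>Splits of a three-population data set\<close>

locale three_populations =
  fixes D :: "'o set" and pop :: "'o \<Rightarrow> nat" and X :: "'o \<Rightarrow> 'a::topological_space"
  assumes finite_data: "finite D" and pop_range: "\<forall>ob\<in>D. pop ob \<in> {1, 2, 3}"
    and popset_nonempty: "\<And>i. i \<in> {1, 2, 3} \<Longrightarrow> popset pop D i \<noteq> {}"
begin

abbreviation "Dp i \<equiv> popset pop D i"
abbreviation "emp i \<equiv> measure_pmf (emp_pmf X (Dp i))"
abbreviation "mix S \<equiv> measure_pmf (oracle_mix pop X D S)"

definition mean_gram :: "('a \<Rightarrow> 'a \<Rightarrow> real) \<Rightarrow> nat \<Rightarrow> nat \<Rightarrow> real" where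
  "mean_gram k i j = (\<integral>x. (\<integral>y. k x y \<partial>emp j) \<partial>emp i)"

definition pop_count :: "'o set \<Rightarrow> nat \<Rightarrow> nat" where
  "pop_count S i = card {ob \<in> S. pop ob = i}"

lemma mem_popset_iff: "y \<in> Dp i \<longleftrightarrow> y \<in> D \<and> pop y = i"
  unfolding popset_def by simp

lemma popset_subset: "Dp i \<subseteq> D"
  unfolding popset_def by auto

lemma finite_popset: "finite (Dp i)"
  using popset_subset finite_data by (rule finite_subset)

lemma card_popset_pos: "i \<in> {1, 2, 3} \<Longrightarrow> 1 \<le> card (Dp i)"
  using popset_nonempty finite_popset by (simp add: Suc_le_eq card_gt_0_iff)

lemma pop_cases: "y \<in> D \<Longrightarrow> pop y = 1 \<or> pop y = 2 \<or> pop y = 3"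
  using pop_range by auto

lemma sum_over_popsets: "(\<Sum>p\<in>D. h p) = (\<Sum>i\<in>{1, 2, 3}. \<Sum>p\<in>Dp i. h p)"
  unfolding popset_def by (rule sum.group[symmetric]) (use finite_data pop_range in auto)

lemma sum_by_pop_count:
  fixes f :: "nat \<Rightarrow> real"
  assumes "S \<subseteq> D"
  shows "(\<Sum>ob\<in>S. f (pop ob)) = (\<Sum>i\<in>{1, 2, 3}. real (pop_count S i) * f i)"
proof -
  have "finite S" using assms finite_data finite_subset by auto
  then have "(\<Sum>ob\<in>S. f (pop ob)) = (\<Sum>i\<in>{1, 2, 3}. \<Sum>ob\<in>{x \<in> S. pop x = i}. f (pop ob))"
    by (intro sum.group[symmetric]) (use assms pop_range in auto)
  also have "\<dots> = (\<Sum>i\<in>{1, 2, 3}. real (pop_count S i) * f i)"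
    unfolding pop_count_def by (intro sum.cong refl) auto
  finally show ?thesis .
qed

lemma pop_count_sum: "S \<subseteq> D \<Longrightarrow> pop_count S 1 + pop_count S 2 + pop_count S 3 = card S"
  using sum_by_pop_count[of S "\<lambda>_. 1"] by simp

lemma pop_count_eq_card_Int: "S \<subseteq> D \<Longrightarrow> pop_count S i = card (S \<inter> Dp i)"
  unfolding pop_count_def popset_def by (intro arg_cong[where f = card]) auto

lemma pop_count_le: "S \<subseteq> D \<Longrightarrow> pop_count S i \<le> card (Dp i)"
  using pop_count_eq_card_Int finite_popset by (simp add: card_mono)

lemma pop_count_Diff: "S \<subseteq> D \<Longrightarrow> pop_count (D - S) i = card (Dp i) - pop_count S i"
proof -
  assume "S \<subseteq> D"
  have "(D - S) \<inter> Dp i = Dp i - S \<inter> Dp i" using popset_subset by auto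
  then show ?thesis
    using pop_count_eq_card_Int[OF \<open>S \<subseteq> D\<close>] pop_count_eq_card_Int[of "D - S"] finite_popset
    by (simp add: card_Diff_subset)
qed

lemma pop_count_eq_0:
  assumes "\<And>y. y \<in> S \<Longrightarrow> pop y \<noteq> i"
  shows "pop_count S i = 0"
proof -
  have none: "{ob \<in> S. pop ob = i} = {}" using assms by auto
  show ?thesis unfolding pop_count_def none by simp
qed

lemma pop_count_popset: "S \<subseteq> D \<Longrightarrow> Dp i \<subseteq> S \<Longrightarrow> pop_count S i = card (Dp i)"
  using pop_count_eq_card_Int[of S i] by (simp add: Int_absorb1)

lemma pop_count_insert:
  assumes "y \<notin> S" "finite S"
  shows "pop_count (insert y S) i = pop_count S i + (if pop y = i then 1 else 0)"
proof -
  have "{ob \<in> insert y S. pop ob = i}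
    = (if pop y = i then insert y {ob \<in> S. pop ob = i} else {ob \<in> S. pop ob = i})"
    by auto
  then show ?thesis unfolding pop_count_def using assms by auto
qed

lemma card_data: "card D = card (Dp 1) + card (Dp 2) + card (Dp 3)"
  using pop_count_sum[of D] pop_count_eq_card_Int[of D] popset_subset by (simp add: Int_absorb1)

lemma card_data_ge_3: "3 \<le> card D"
  using card_data card_popset_pos[of 1] card_popset_pos[of 2] card_popset_pos[of 3] by simp

lemma mean_gram_eq_sum:
  assumes "i \<in> {1, 2, 3}" "j \<in> {1, 2, 3}"
  shows "mean_gram k i j
    = (\<Sum>p\<in>Dp i. \<Sum>q\<in>Dp j. k (X p) (X q)) / (real (card (Dp i)) * real (card (Dp j)))"
  using assms popset_nonempty finite_popset
  by (simp add: mean_gram_def integral_emp_pmf sum_divide_distrib[symmetric] mult.commute)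

lemma mean_gram_sym:
  assumes "\<forall>x y. k x y = k y x" "i \<in> {1, 2, 3}" "j \<in> {1, 2, 3}"
  shows "mean_gram k i j = mean_gram k j i"
  unfolding mean_gram_eq_sum[OF assms(2,3)] mean_gram_eq_sum[OF assms(3,2)] using assms(1)
  by (subst sum.swap) (simp add: mult.commute)

lemma mean_gram_psd:
  assumes "pd_kernel k"
  shows "0 \<le> (\<Sum>i\<in>{1, 2, 3}. \<Sum>j\<in>{1, 2, 3}. u i * u j * mean_gram k i j)"
proof -
  define c where "c p = u (pop p) / real (card (Dp (pop p)))" for p
  have "0 \<le> (\<Sum>p\<in>D. \<Sum>q\<in>D. c p * c q * k (X p) (X q))"
    using assms finite_data by (rule pd_kernel_double_sum_nonneg)
  also have "\<dots> = (\<Sum>i\<in>{1, 2, 3}. \<Sum>p\<in>Dp i. \<Sum>j\<in>{1, 2, 3}. \<Sum>q\<in>Dp j. c p * c q * k (X p) (X q))"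
    by (simp only: sum_over_popsets)
  also have "\<dots> = (\<Sum>i\<in>{1, 2, 3}. \<Sum>j\<in>{1, 2, 3}. \<Sum>p\<in>Dp i. \<Sum>q\<in>Dp j. c p * c q * k (X p) (X q))"
    by (rule sum.cong[OF refl], rule sum.swap)
  also have "\<dots> = (\<Sum>i\<in>{1, 2, 3}. \<Sum>j\<in>{1, 2, 3}. u i * u j * mean_gram k i j)"
  proof (intro sum.cong refl)
    fix i j :: nat assume ij: "i \<in> {1, 2, 3}" "j \<in> {1, 2, 3}"
    have "(\<Sum>p\<in>Dp i. \<Sum>q\<in>Dp j. c p * c q * k (X p) (X q))
      = u i / real (card (Dp i)) * (u j / real (card (Dp j))) * (\<Sum>p\<in>Dp i. \<Sum>q\<in>Dp j. k (X p) (X q))"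
      unfolding c_def sum_distrib_left by (intro sum.cong refl) (simp_all add: mem_popset_iff)
    then show "(\<Sum>p\<in>Dp i. \<Sum>q\<in>Dp j. c p * c q * k (X p) (X q)) = u i * u j * mean_gram k i j"
      unfolding mean_gram_eq_sum[OF ij] by simp
  qed
  finally show ?thesis .
qed

lemma double_integral_oracle_mix:
  assumes S: "S \<subseteq> D" "S \<noteq> {}" and T: "T \<subseteq> D" "T \<noteq> {}"
  shows "(\<integral>x. (\<integral>y. k x y \<partial>mix T) \<partial>mix S)
    = (\<Sum>i\<in>{1, 2, 3}. \<Sum>j\<in>{1, 2, 3}. real (pop_count S i) * real (pop_count T j) * mean_gram k i j)
      / (real (card S) * real (card T))"
proof -
  have "finite S" "finite T" using S T finite_data finite_subset by auto
  have popsets: "finite (Dp (pop ob)) \<and> Dp (pop ob) \<noteq> {}" if "ob \<in> D" for ob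
    using that finite_popset popset_nonempty pop_range by blast
  have inner: "(\<integral>y. k x y \<partial>mix T) = (\<Sum>ob'\<in>T. \<integral>y. k x y \<partial>emp (pop ob')) / real (card T)" for x
    by (rule integral_oracle_mix[OF \<open>finite T\<close> T(2)]) (use popsets T(1) in auto)
  have outer: "(\<integral>x. h x \<partial>mix S) = (\<Sum>ob\<in>S. \<integral>x. h x \<partial>emp (pop ob)) / real (card S)" for h
    by (rule integral_oracle_mix[OF \<open>finite S\<close> S(2)]) (use popsets S(1) in auto)
  have swap: "(\<integral>x. (\<Sum>ob'\<in>T. \<integral>y. k x y \<partial>emp (pop ob')) / real (card T) \<partial>emp (pop ob))
    = (\<Sum>ob'\<in>T. mean_gram k (pop ob) (pop ob')) / real (card T)" if "ob \<in> S" for ob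
  proof -
    have "finite (set_pmf (emp_pmf X (Dp (pop ob))))"
      using popsets \<open>ob \<in> S\<close> S(1) by (auto simp: set_pmf_emp_pmf)
    then show ?thesis
      unfolding mean_gram_def integral_divide_zero
      by (simp add: Bochner_Integration.integral_sum integrable_measure_pmf_finite)
  qed
  have "(\<integral>x. (\<integral>y. k x y \<partial>mix T) \<partial>mix S)
    = (\<Sum>ob\<in>S. (\<Sum>ob'\<in>T. mean_gram k (pop ob) (pop ob')) / real (card T)) / real (card S)"
    unfolding inner outer by (rule arg_cong2[where f = "(/)"], rule sum.cong[OF refl], erule swap, rule refl)
  also have "\<dots> = (\<Sum>ob\<in>S. \<Sum>ob'\<in>T. mean_gram k (pop ob) (pop ob')) / (real (card S) * real (card T))"
    by (simp add: sum_divide_distrib mult.commute)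
  also have "(\<Sum>ob\<in>S. \<Sum>ob'\<in>T. mean_gram k (pop ob) (pop ob'))
    = (\<Sum>ob\<in>S. \<Sum>j\<in>{1, 2, 3}. real (pop_count T j) * mean_gram k (pop ob) j)"
    by (intro sum.cong refl sum_by_pop_count[OF T(1)])
  also have "\<dots> = (\<Sum>i\<in>{1, 2, 3}. real (pop_count S i) * (\<Sum>j\<in>{1, 2, 3}. real (pop_count T j) * mean_gram k i j))"
    by (rule sum_by_pop_count[OF S(1)])
  also have "\<dots> = (\<Sum>i\<in>{1, 2, 3}. \<Sum>j\<in>{1, 2, 3}. real (pop_count S i) * real (pop_count T j) * mean_gram k i j)"
    by (simp only: sum_distrib_left mult.assoc)
  finally show ?thesis .
qed

lemma pop_count_subset_popset:
  assumes "S \<subseteq> Dp i"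
  shows "pop_count S j = (if j = i then card S else 0)"
proof -
  have "S \<subseteq> D" using assms popset_subset by blast
  have "S \<inter> Dp j = (if j = i then S else {})" using assms by (auto simp: mem_popset_iff)
  then show ?thesis using pop_count_eq_card_Int[OF \<open>S \<subseteq> D\<close>, of j] by simp
qed

lemma pop_counts_between_popsets:
  assumes "Dp 1 \<subseteq> S" "S \<subseteq> Dp 1 \<union> Dp 2"
  shows "pop_count S 1 = card (Dp 1)" "pop_count S 2 = card S - card (Dp 1)" "pop_count S 3 = 0"
proof -
  have "S \<subseteq> D" using assms popset_subset by blast
  show "pop_count S 1 = card (Dp 1)" by (rule pop_count_popset[OF \<open>S \<subseteq> D\<close> assms(1)])
  show "pop_count S 3 = 0" by (rule pop_count_eq_0) (use assms(2) in \<open>auto simp: popset_def\<close>)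
  then show "pop_count S 2 = card S - card (Dp 1)"
    using pop_count_sum[OF \<open>S \<subseteq> D\<close>] \<open>pop_count S 1 = card (Dp 1)\<close> by simp
qed

lemma pop_counts_supset_popsets:
  assumes "Dp 1 \<union> Dp 2 \<subseteq> S" "S \<subseteq> D"
  shows "pop_count S 1 = card (Dp 1)" "pop_count S 2 = card (Dp 2)"
    "pop_count S 3 = card S - card (Dp 1) - card (Dp 2)"
proof -
  show "pop_count S 1 = card (Dp 1)" "pop_count S 2 = card (Dp 2)"
    using pop_count_popset[OF assms(2)] assms(1) by auto
  then show "pop_count S 3 = card S - card (Dp 1) - card (Dp 2)"
    using pop_count_sum[OF assms(2)] by simp
qed

lemma exists_unused_in_popset:
  assumes "S \<subseteq> D" "pop_count S i < card (Dp i)"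
  obtains y where "y \<in> Dp i" "y \<notin> S"
  using pop_count_popset[OF assms(1)] assms(2) by (metis less_irrefl subsetI)

end

lemma C1_of_0: "C1_of c 0 = {}"
  unfolding C1_of_def by simp

lemma C1_of_Suc: "C1_of c (Suc r) = insert (c (Suc r)) (C1_of c r)"
  unfolding C1_of_def by (simp add: atLeastAtMostSuc_conv)

lemma C1_of_mono: "r \<le> r' \<Longrightarrow> C1_of c r \<subseteq> C1_of c r'"
  unfolding C1_of_def by auto

lemma C1_of_last: "1 \<le> r \<Longrightarrow> c r \<in> C1_of c r"
  unfolding C1_of_def by auto

locale oracle_three_populations = three_populations D pop X
  for D :: "'o set" and pop :: "'o \<Rightarrow> nat" and X :: "'o \<Rightarrow> 'a::metric_space" +
  fixes k :: "'a \<Rightarrow> 'a \<Rightarrow> real"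
  assumes characteristic: "characteristic_kernel k"
    and emp_pmf_distinct:
      "\<And>i j. i \<in> {1, 2, 3} \<Longrightarrow> j \<in> {1, 2, 3} \<Longrightarrow> i \<noteq> j \<Longrightarrow> emp_pmf X (Dp i) \<noteq> emp_pmf X (Dp j)"
begin

abbreviation "split_value C \<equiv> dw_star k pop X D C (D - C)"

lemma mean_gram_swap:
  "mean_gram k 2 1 = mean_gram k 1 2" "mean_gram k 3 1 = mean_gram k 1 3" "mean_gram k 3 2 = mean_gram k 2 3"
  using mean_gram_sym[of k] characteristic unfolding characteristic_kernel_def pd_kernel_def by auto

lemma mean_gram_double_sum:
  "(\<Sum>i\<in>{1, 2, 3}. \<Sum>j\<in>{1, 2, 3}. u i * v j * mean_gram k i j)
    = u 1 * v 1 * mean_gram k 1 1 + u 2 * v 2 * mean_gram k 2 2 + u 3 * v 3 * mean_gram k 3 3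
      + (u 1 * v 2 + u 2 * v 1) * mean_gram k 1 2 + (u 1 * v 3 + u 3 * v 1) * mean_gram k 1 3
      + (u 2 * v 3 + u 3 * v 2) * mean_gram k 2 3"
  using mean_gram_swap by (simp add: algebra_simps)

lemma mmd2_emp: "mmd2 k (emp i) (emp j) = mean_gram k i i + mean_gram k j j - 2 * mean_gram k i j"
  unfolding mmd2_def mean_gram_def ..

lemma mmd2_emp_pos:
  assumes ij: "i \<in> {1, 2, 3}" "j \<in> {1, 2, 3}" "i \<noteq> j"
  shows "0 < mmd2 k (emp i) (emp j)"
proof -
  have "finite (set_pmf (emp_pmf X (Dp l)))" if "l \<in> {1, 2, 3}" for l
    using that finite_popset popset_nonempty by (simp add: set_pmf_emp_pmf)
  then have "mmd2 k (emp i) (emp j) \<noteq> 0"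
    using characteristic_kernel_pmf_eq[OF characteristic] emp_pmf_distinct ij by blast
  moreover have "0 \<le> mmd2 k (emp i) (emp j)"
  proof -
    define u where "u l = (if l = i then 1 else if l = j then -1 else 0 :: real)" for l :: nat
    have "0 \<le> (\<Sum>a\<in>{1, 2, 3}. \<Sum>b\<in>{1, 2, 3}. u a * u b * mean_gram k a b)"
      using characteristic unfolding characteristic_kernel_def by (blast intro: mean_gram_psd)
    also have "\<dots> = mmd2 k (emp i) (emp j)"
      unfolding mean_gram_double_sum mmd2_emp using ij mean_gram_swap
      by (auto simp: u_def algebra_simps)
    finally show ?thesis .
  qed
  ultimately show ?thesis by linarith
qed

sublocale G: three_population_gram "real (card (Dp 1))" "real (card (Dp 2))" "real (card (Dp 3))"
  "mean_gram k 1 1" "mean_gram k 1 2" "mean_gram k 1 3" "mean_gram k 2 2" "mean_gram k 2 3" "mean_gram k 3 3"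
proof
  show "1 \<le> real (card (Dp 1))" "1 \<le> real (card (Dp 2))" "1 \<le> real (card (Dp 3))"
    using card_popset_pos by auto
  show "0 \<le> u1 * u1 * mean_gram k 1 1 + u2 * u2 * mean_gram k 2 2 + u3 * u3 * mean_gram k 3 3
    + 2 * u1 * u2 * mean_gram k 1 2 + 2 * u1 * u3 * mean_gram k 1 3 + 2 * u2 * u3 * mean_gram k 2 3"
    for u1 u2 u3
    using mean_gram_psd[of k "\<lambda>i. if i = 1 then u1 else if i = 2 then u2 else u3"] characteristic
    unfolding mean_gram_double_sum characteristic_kernel_def by (simp add: algebra_simps)
  show "0 < mean_gram k 1 1 + mean_gram k 2 2 - 2 * mean_gram k 1 2"
    "0 < mean_gram k 1 1 + mean_gram k 3 3 - 2 * mean_gram k 1 3"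
    "0 < mean_gram k 2 2 + mean_gram k 3 3 - 2 * mean_gram k 2 3"
    using mmd2_emp_pos[of 1 2] mmd2_emp_pos[of 1 3] mmd2_emp_pos[of 2 3] unfolding mmd2_emp by simp_all
qed

lemma mmd2_emp_eq_d:
  "mmd2 k (emp 1) (emp 2) = G.d12" "mmd2 k (emp 1) (emp 3) = G.d13" "mmd2 k (emp 2) (emp 3) = G.d23"
  unfolding G.d12_def G.d13_def G.d23_def mmd2_emp by simp_all

lemma ntot_eq_card: "G.ntot = real (card D)"
  unfolding G.ntot_def card_data by simp

lemma double_integral_oracle_mix_eq_gram_form:
  assumes "S \<subseteq> D" "S \<noteq> {}" "T \<subseteq> D" "T \<noteq> {}"
  shows "(\<integral>x. (\<integral>y. k x y \<partial>mix T) \<partial>mix S)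
    = G.gram_form (pop_count S 1) (pop_count S 2) (pop_count S 3) (pop_count T 1) (pop_count T 2) (pop_count T 3)
      / (real (card S) * real (card T))"
  unfolding double_integral_oracle_mix[OF assms] mean_gram_double_sum G.gram_form_def ..

lemma split_value_eq_objective:
  assumes C: "C \<subseteq> D" "C \<noteq> {}" "C \<noteq> D"
  shows "split_value C = G.objective (pop_count C 1) (pop_count C 2) (pop_count C 3)"
proof -
  define s where "s = real (card C)"
  have "finite C" using C finite_data finite_subset by auto
  have "card C < card D" using C finite_data by (simp add: psubset_card_mono psubsetI)
  have "0 < card C" using C \<open>finite C\<close> by (simp add: card_gt_0_iff)
  have D_C: "D - C \<subseteq> D" "D - C \<noteq> {}" using C by auto
  have card_D_C: "real (card (D - C)) = G.ntot - s"
    using C \<open>finite C\<close> \<open>card C < card D\<close> ntot_eq_card unfolding s_def by (simp add: card_Diff_subset)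
  have s: "s = real (pop_count C 1) + real (pop_count C 2) + real (pop_count C 3)"
    using pop_count_sum[OF C(1)] unfolding s_def by simp
  have counts_D_C: "real (pop_count (D - C) i) = real (card (Dp i)) - real (pop_count C i)" for i
    using pop_count_Diff[OF C(1)] pop_count_le[OF C(1)] by (simp add: of_nat_diff)
  have "0 < s" "s < G.ntot"
    using \<open>0 < card C\<close> \<open>card C < card D\<close> ntot_eq_card unfolding s_def by simp_all
  have "mmd2 k (mix C) (mix (D - C))
    = G.gram_form (pop_count C 1) (pop_count C 2) (pop_count C 3) (pop_count C 1) (pop_count C 2) (pop_count C 3) / s\<^sup>2
      + G.gram_form (real (card (Dp 1)) - pop_count C 1) (real (card (Dp 2)) - pop_count C 2)
          (real (card (Dp 3)) - pop_count C 3) (real (card (Dp 1)) - pop_count C 1)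
          (real (card (Dp 2)) - pop_count C 2) (real (card (Dp 3)) - pop_count C 3) / (G.ntot - s)\<^sup>2
      - 2 * G.gram_form (pop_count C 1) (pop_count C 2) (pop_count C 3)
          (real (card (Dp 1)) - pop_count C 1) (real (card (Dp 2)) - pop_count C 2)
          (real (card (Dp 3)) - pop_count C 3) / (s * (G.ntot - s))"
    unfolding mmd2_def double_integral_oracle_mix_eq_gram_form[OF C(1,2) C(1,2)]
      double_integral_oracle_mix_eq_gram_form[OF D_C D_C]
      double_integral_oracle_mix_eq_gram_form[OF C(1,2) D_C] card_D_C counts_D_C s_def[symmetric]
    by (simp add: power2_eq_square)
  moreover have "split_value C = s * (G.ntot - s) / G.ntot * mmd2 k (mix C) (mix (D - C))"
    unfolding dw_star_def using card_D_C ntot_eq_card unfolding s_def by simp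
  ultimately show ?thesis
    using G.objective_eq_weighted_mmd[of "pop_count C 1" "pop_count C 2" "pop_count C 3"]
      \<open>0 < s\<close> \<open>s < G.ntot\<close>
    unfolding s[symmetric] by simp
qed

lemma split_value_insert:
  assumes "C \<subseteq> D" "y \<in> D - C" "card C + 1 < card D"
  shows "split_value (insert y C) = G.objective
    (real (pop_count C 1) + of_bool (pop y = 1)) (real (pop_count C 2) + of_bool (pop y = 2))
    (real (pop_count C 3) + of_bool (pop y = 3))"
proof -
  have "finite C" using assms finite_data finite_subset by auto
  then have "insert y C \<noteq> D" using assms by (metis card_insert_disjoint DiffE less_irrefl Suc_eq_plus1)
  then show ?thesis
    using split_value_eq_objective[of "insert y C"] pop_count_insert[of y C] assms \<open>finite C\<close> by simp
qed

section \<open>Runs of BS*\<close>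

lemma first_step_maximizer_iff:
  assumes "x \<in> Dp 1"
  shows "maximizes_at D (dw_star k pop X D) {} x \<longleftrightarrow> G.g22 \<le> G.g11 \<and> G.g33 \<le> G.g11"
proof -
  have value_single: "split_value {y}
    = G.objective (of_bool (pop y = 1)) (of_bool (pop y = 2)) (of_bool (pop y = 3))" if "y \<in> D" for y
    using split_value_insert[of "{}" y] that card_data_ge_3 by (simp add: pop_count_def)
  have x: "x \<in> D" "pop x = 1" using assms by (auto simp: mem_popset_iff)
  obtain y2 y3 where "y2 \<in> Dp 2" "y3 \<in> Dp 3" using popset_nonempty[of 2] popset_nonempty[of 3] by blast
  then have y2: "y2 \<in> D" "pop y2 = 2" and y3: "y3 \<in> D" "pop y3 = 3" by (auto simp: mem_popset_iff)
  have "maximizes_at D (dw_star k pop X D) {} x \<longleftrightarrow> (\<forall>y\<in>D. split_value {y} \<le> split_value {x})"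
    unfolding maximizes_at_def using x by simp
  also have "\<dots> \<longleftrightarrow> G.objective 0 1 0 \<le> G.objective 1 0 0 \<and> G.objective 0 0 1 \<le> G.objective 1 0 0"
  proof
    assume "\<forall>y\<in>D. split_value {y} \<le> split_value {x}"
    then have "split_value {y2} \<le> split_value {x}" "split_value {y3} \<le> split_value {x}"
      using y2 y3 by blast+
    then show "G.objective 0 1 0 \<le> G.objective 1 0 0 \<and> G.objective 0 0 1 \<le> G.objective 1 0 0"
      using value_single[OF y2(1)] value_single[OF y3(1)] value_single[OF x(1)] y2 y3 x by simp
  next
    assume le: "G.objective 0 1 0 \<le> G.objective 1 0 0 \<and> G.objective 0 0 1 \<le> G.objective 1 0 0"
    show "\<forall>y\<in>D. split_value {y} \<le> split_value {x}"
    proof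
      fix y assume "y \<in> D"
      then consider "pop y = 1" | "pop y = 2" | "pop y = 3" using pop_cases by blast
      then show "split_value {y} \<le> split_value {x}"
        using value_single[OF \<open>y \<in> D\<close>] value_single[OF x(1)] x(2) le by cases simp_all
    qed
  qed
  also have "\<dots> \<longleftrightarrow> G.g22 \<le> G.g11 \<and> G.g33 \<le> G.g11"
    using G.objective_first_step_iff by simp
  finally show ?thesis .
qed

context
  fixes c :: "nat \<Rightarrow> 'o"
  assumes run: "BS_star_run D (dw_star k pop X D) c"
begin

lemma run_maximizes:
  "Suc r \<le> card D - 1 \<Longrightarrow> maximizes_at D (dw_star k pop X D) (C1_of c r) (c (Suc r))"
  using run unfolding BS_star_run_def by (metis atLeastAtMost_iff diff_Suc_1 le_add1 plus_1_eq_Suc)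

lemma run_C1_subset_card: "r \<le> card D - 1 \<Longrightarrow> C1_of c r \<subseteq> D \<and> card (C1_of c r) = r"
proof (induction r)
  case 0
  then show ?case by (simp add: C1_of_0)
next
  case (Suc r)
  then have "C1_of c r \<subseteq> D" "card (C1_of c r) = r" by simp_all
  moreover have "c (Suc r) \<in> D - C1_of c r"
    using run_maximizes[OF Suc.prems] unfolding maximizes_at_def by blast
  moreover have "finite (C1_of c r)" using calculation(1) finite_data finite_subset by blast
  ultimately show ?case by (simp add: C1_of_Suc)
qed

lemma split_value_run:
  assumes "1 \<le> r" "r < card D"
  shows "split_value (C1_of c r)
    = G.objective (pop_count (C1_of c r) 1) (pop_count (C1_of c r) 2) (pop_count (C1_of c r) 3)"
proof (rule split_value_eq_objective)
  have "card (C1_of c r) = r" "C1_of c r \<subseteq> D" using run_C1_subset_card[of r] assms by auto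
  then show "C1_of c r \<subseteq> D" "C1_of c r \<noteq> {}" "C1_of c r \<noteq> D" using assms by auto
qed

lemma run_step_in_popset:
  assumes r: "Suc r \<le> card D - 1" and y: "y \<in> Dp i" "y \<notin> C1_of c r"
    and beats: "\<And>z. z \<in> D - C1_of c r \<Longrightarrow> pop z \<noteq> i \<Longrightarrow>
      split_value (insert z (C1_of c r)) < split_value (insert y (C1_of c r))"
  shows "c (Suc r) \<in> Dp i"
proof -
  have "c (Suc r) \<in> D - C1_of c r"
    and "split_value (insert y (C1_of c r)) \<le> split_value (insert (c (Suc r)) (C1_of c r))"
    using run_maximizes[OF r] y popset_subset unfolding maximizes_at_def by auto
  then show ?thesis using beats[of "c (Suc r)"] by (auto simp: mem_popset_iff)
qed

end

text \<open>The first step of each phase may be a tie (equality in (A1), (A2) or (A3)); the population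
  chosen there is therefore a hypothesis, and the strict comparisons take over afterwards.\<close>
context
  fixes c :: "nat \<Rightarrow> 'o"
  assumes run: "BS_star_run D (dw_star k pop X D) c"
    and pop1_best: "G.g22 \<le> G.g11" "G.g33 \<le> G.g11" and first_pop1: "c 1 \<in> Dp 1"
begin

lemma phase1_step:
  assumes r: "1 \<le> r" "r < card (Dp 1)" and C1: "C1_of c r \<subseteq> Dp 1"
  shows "c (Suc r) \<in> Dp 1"
proof -
  define C where "C = C1_of c r"
  have r_le: "Suc r \<le> card D - 1"
    using r card_data card_popset_pos[of 2] card_popset_pos[of 3] by simp
  have C: "C \<subseteq> D" "card C = r" using run_C1_subset_card[OF run, of r] r_le unfolding C_def by auto
  have counts: "pop_count C j = (if j = 1 then r else 0)" for j
    using pop_count_subset_popset[OF C1[folded C_def]] C(2) by simp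
  obtain y where y: "y \<in> Dp 1" "y \<notin> C"
    using exists_unused_in_popset[OF C(1), of 1] counts r by auto
  have lt: "card C + 1 < card D" "real r + 1 < G.ntot" using C r_le ntot_eq_card by auto
  show ?thesis
  proof (rule run_step_in_popset[OF run r_le y[unfolded C_def]])
    fix z assume z: "z \<in> D - C1_of c r" "pop z \<noteq> 1"
    have "y \<in> D - C" "pop y = 1" using y by (auto simp: mem_popset_iff)
    then have "split_value (insert y C) = G.objective (real r + 1) 0 0"
      using split_value_insert[OF C(1) _ lt(1), of y] counts by simp
    moreover have "split_value (insert z C) = G.objective r (of_bool (pop z = 2)) (of_bool (pop z = 3))"
      using split_value_insert[OF C(1) z(1)[folded C_def] lt(1)] counts z(2) by simp
    moreover have "pop z = 2 \<or> pop z = 3" using z pop_cases by auto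
    ultimately show "split_value (insert z (C1_of c r)) < split_value (insert y (C1_of c r))"
      using G.objective_pop1_beats_others[OF pop1_best, of r] r lt(2) unfolding C_def by auto
  qed
qed

lemma phase1_C1_subset: "r \<le> card (Dp 1) \<Longrightarrow> C1_of c r \<subseteq> Dp 1"
proof (induction r)
  case 0
  then show ?case by (simp add: C1_of_0)
next
  case (Suc r)
  then have "C1_of c r \<subseteq> Dp 1" by simp
  moreover have "c (Suc r) \<in> Dp 1"
    using first_pop1 phase1_step[OF _ _ \<open>C1_of c r \<subseteq> Dp 1\<close>] Suc.prems by (cases "r = 0") auto
  ultimately show ?case by (simp add: C1_of_Suc)
qed

lemma phase1_value:
  assumes "1 \<le> r" "r \<le> card (Dp 1)"
  shows "split_value (C1_of c r) = G.objective r 0 0"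
proof -
  have "r < card D" using assms card_data card_popset_pos[of 2] by simp
  then have "card (C1_of c r) = r" using run_C1_subset_card[OF run, of r] by simp
  then show ?thesis
    using split_value_run[OF run assms(1) \<open>r < card D\<close>] pop_count_subset_popset[OF phase1_C1_subset[OF assms(2)]]
    by simp
qed

lemma phase1_value_increasing:
  assumes "1 \<le> r" "r < card (Dp 1)"
  shows "split_value (C1_of c r) < split_value (C1_of c (Suc r))"
proof -
  have "real r + 1 < G.ntot" using assms card_data card_popset_pos[of 2] ntot_eq_card by simp
  then show ?thesis
    using G.objective_pop1_increasing[OF G.g11_pos[OF pop1_best(1)], of r] assms
      phase1_value[of r] phase1_value[of "Suc r"] by (simp add: add.commute)
qed

lemma C1_after_phase1: "C1_of c (card (Dp 1)) = Dp 1"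
proof -
  have "card (Dp 1) \<le> card D - 1" using card_data card_popset_pos[of 2] by simp
  then have "card (C1_of c (card (Dp 1))) = card (Dp 1)" using run_C1_subset_card[OF run] by blast
  then show ?thesis using phase1_C1_subset[of "card (Dp 1)"] finite_popset by (simp add: card_subset_eq)
qed

lemma phase2_start_maximizer_iff:
  assumes "x \<in> Dp 2"
  shows "maximizes_at D (dw_star k pop X D) (C1_of c (card (Dp 1))) x \<longleftrightarrow> 0 \<le> G.delta"
proof -
  have lt: "card (Dp 1) + 1 < card D" using card_data card_popset_pos[of 2] card_popset_pos[of 3] by simp
  have counts: "pop_count (Dp 1) j = (if j = 1 then card (Dp 1) else 0)" for j
    using pop_count_subset_popset[of "Dp 1" 1 j] by simp
  have value_next: "split_value (insert y (Dp 1))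
    = G.objective (card (Dp 1)) (of_bool (pop y = 2)) (of_bool (pop y = 3))" if "y \<in> D - Dp 1" for y
    using split_value_insert[OF popset_subset that lt] counts that by (auto simp: mem_popset_iff)
  have x: "x \<in> D - Dp 1" "pop x = 2" using assms by (auto simp: mem_popset_iff)
  obtain y3 where "y3 \<in> Dp 3" using popset_nonempty[of 3] by blast
  then have y3: "y3 \<in> D - Dp 1" "pop y3 = 3" by (auto simp: mem_popset_iff)
  have "maximizes_at D (dw_star k pop X D) (Dp 1) x
    \<longleftrightarrow> (\<forall>y\<in>D - Dp 1. split_value (insert y (Dp 1)) \<le> split_value (insert x (Dp 1)))"
    unfolding maximizes_at_def using x by simp
  also have "\<dots> \<longleftrightarrow> G.objective (card (Dp 1)) 0 1 \<le> G.objective (card (Dp 1)) 1 0"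
  proof
    assume "\<forall>y\<in>D - Dp 1. split_value (insert y (Dp 1)) \<le> split_value (insert x (Dp 1))"
    then have "split_value (insert y3 (Dp 1)) \<le> split_value (insert x (Dp 1))" using y3(1) by blast
    then show "G.objective (card (Dp 1)) 0 1 \<le> G.objective (card (Dp 1)) 1 0"
      using value_next[OF y3(1)] value_next[OF x(1)] y3(2) x(2) by simp
  next
    assume le: "G.objective (card (Dp 1)) 0 1 \<le> G.objective (card (Dp 1)) 1 0"
    show "\<forall>y\<in>D - Dp 1. split_value (insert y (Dp 1)) \<le> split_value (insert x (Dp 1))"
    proof
      fix y assume y: "y \<in> D - Dp 1"
      then have "pop y = 2 \<or> pop y = 3" using pop_cases by (auto simp: mem_popset_iff)
      then show "split_value (insert y (Dp 1)) \<le> split_value (insert x (Dp 1))"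
        using value_next[OF y] value_next[OF x(1)] x(2) le by auto
    qed
  qed
  also have "\<dots> \<longleftrightarrow> 0 \<le> G.delta" by (rule G.objective_phase2_start_iff)
  finally show ?thesis unfolding C1_after_phase1 .
qed

context
  assumes delta_nonneg: "0 \<le> G.delta" and first_pop2: "c (card (Dp 1) + 1) \<in> Dp 2"
begin

lemma phase2_step:
  assumes j: "1 \<le> j" "j < card (Dp 2)"
    and C1: "Dp 1 \<subseteq> C1_of c (card (Dp 1) + j)" "C1_of c (card (Dp 1) + j) \<subseteq> Dp 1 \<union> Dp 2"
  shows "c (Suc (card (Dp 1) + j)) \<in> Dp 2"
proof -
  define C where "C = C1_of c (card (Dp 1) + j)"
  have r_le: "Suc (card (Dp 1) + j) \<le> card D - 1" using j card_data card_popset_pos[of 3] by simp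
  have C: "C \<subseteq> D" "card C = card (Dp 1) + j"
    using run_C1_subset_card[OF run, of "card (Dp 1) + j"] r_le unfolding C_def by auto
  have counts: "pop_count C 1 = card (Dp 1)" "pop_count C 2 = j" "pop_count C 3 = 0"
    using pop_counts_between_popsets[OF C1[folded C_def]] C(2) by simp_all
  have "pop_count C 2 < card (Dp 2)" using counts j by simp
  then obtain y where y: "y \<in> Dp 2" "y \<notin> C" by (rule exists_unused_in_popset[OF C(1)])
  have lt: "card C + 1 < card D" using C r_le by simp
  have j_real: "1 \<le> real j" "real j \<le> real (card (Dp 2)) - 1" using j by auto
  show ?thesis
  proof (rule run_step_in_popset[OF run r_le y[unfolded C_def]])
    fix z assume z: "z \<in> D - C1_of c (card (Dp 1) + j)" "pop z \<noteq> 2"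
    have "z \<notin> Dp 1" using z(1) C1(1) by blast
    then have "pop z = 3" using z pop_cases[of z] by (auto simp: mem_popset_iff)
    have "y \<in> D - C" "pop y = 2" using y by (auto simp: mem_popset_iff)
    then have "split_value (insert y C) = G.objective (card (Dp 1)) (real j + 1) 0"
      using split_value_insert[OF C(1) _ lt, of y] counts by simp
    moreover have "split_value (insert z C) = G.objective (card (Dp 1)) j 1"
      using split_value_insert[OF C(1) z(1)[folded C_def] lt] counts \<open>pop z = 3\<close> by simp
    moreover have "G.objective (card (Dp 1)) j 1 < G.objective (card (Dp 1)) (real j + 1) 0"
      using G.objective_pop2_beats_pop3[OF delta_nonneg j_real] by simp
    ultimately show "split_value (insert z (C1_of c (card (Dp 1) + j)))
      < split_value (insert y (C1_of c (card (Dp 1) + j)))"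
      unfolding C_def by simp
  qed
qed

lemma phase2_C1_between:
  "j \<le> card (Dp 2) \<Longrightarrow> Dp 1 \<subseteq> C1_of c (card (Dp 1) + j) \<and> C1_of c (card (Dp 1) + j) \<subseteq> Dp 1 \<union> Dp 2"
proof (induction j)
  case 0
  then show ?case using C1_after_phase1 by simp
next
  case (Suc j)
  then have between: "Dp 1 \<subseteq> C1_of c (card (Dp 1) + j)" "C1_of c (card (Dp 1) + j) \<subseteq> Dp 1 \<union> Dp 2"
    by simp_all
  have "c (Suc (card (Dp 1) + j)) \<in> Dp 2"
    using first_pop2 phase2_step[OF _ _ between] Suc.prems by (cases "j = 0") auto
  moreover have "C1_of c (card (Dp 1) + Suc j) = insert (c (Suc (card (Dp 1) + j))) (C1_of c (card (Dp 1) + j))"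
    by (simp add: C1_of_Suc)
  ultimately show ?case using between by (simp add: subset_iff)
qed

lemma phase2_value:
  assumes "j \<le> card (Dp 2)"
  shows "split_value (C1_of c (card (Dp 1) + j)) = G.objective (card (Dp 1)) j 0"
proof -
  have "card (Dp 1) + j < card D" using assms card_data card_popset_pos[of 3] by simp
  then have "card (C1_of c (card (Dp 1) + j)) = card (Dp 1) + j"
    using run_C1_subset_card[OF run, of "card (Dp 1) + j"] by simp
  moreover have "1 \<le> card (Dp 1) + j" using card_popset_pos[of 1] by simp
  ultimately show ?thesis
    using split_value_run[OF run _ \<open>card (Dp 1) + j < card D\<close>]
      pop_counts_between_popsets[OF phase2_C1_between[OF assms, THEN conjunct1]
        phase2_C1_between[OF assms, THEN conjunct2]]
    by simp
qed

lemma phase2_pop2: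
  assumes "card (Dp 1) < r" "r \<le> card (Dp 1) + card (Dp 2)"
  shows "c r \<in> Dp 2"
proof -
  define j where "j = r - card (Dp 1) - 1"
  have j: "r = Suc (card (Dp 1) + j)" "Suc j \<le> card (Dp 2)" using assms unfolding j_def by auto
  have "c r \<notin> C1_of c (card (Dp 1) + j)"
    using run_maximizes[OF run, of "card (Dp 1) + j"] j card_data card_popset_pos[of 3]
    unfolding maximizes_at_def by simp
  moreover have "c r \<in> C1_of c r" using C1_of_last[of r c] j by simp
  ultimately show ?thesis
    using phase2_C1_between[of j] phase2_C1_between[of "Suc j"] j by auto
qed

lemma phase2_value_convex:
  assumes "card (Dp 1) < r" "r < card (Dp 1) + card (Dp 2)"
  shows "2 * split_value (C1_of c r) \<le> split_value (C1_of c (r - 1)) + split_value (C1_of c (r + 1))"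
proof -
  define j where "j = r - card (Dp 1)"
  have j: "r = card (Dp 1) + j" "1 \<le> j" "j + 1 \<le> card (Dp 2)" using assms unfolding j_def by auto
  have "split_value (C1_of c r) = G.objective (card (Dp 1)) j 0"
    using phase2_value[of j] j by simp
  moreover have "split_value (C1_of c (r - 1)) = G.objective (card (Dp 1)) (real j - 1) 0"
    using phase2_value[of "j - 1"] j by (simp add: of_nat_diff)
  moreover have "split_value (C1_of c (r + 1)) = G.objective (card (Dp 1)) (real j + 1) 0"
    using phase2_value[of "j + 1"] j by (simp add: add.assoc add.commute)
  ultimately show ?thesis
    using G.objective_pop2_midpoint_convex[of j] j by simp
qed

lemma C1_after_phase2: "C1_of c (card (Dp 1) + card (Dp 2)) = Dp 1 \<union> Dp 2"
proof -
  have sub: "C1_of c (card (Dp 1) + card (Dp 2)) \<subseteq> Dp 1 \<union> Dp 2"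
    using phase2_C1_between[of "card (Dp 2)"] by simp
  have "card (Dp 1) + card (Dp 2) \<le> card D - 1" using card_data card_popset_pos[of 3] by simp
  then have "card (C1_of c (card (Dp 1) + card (Dp 2))) = card (Dp 1) + card (Dp 2)"
    using run_C1_subset_card[OF run] by blast
  also have "\<dots> = card (Dp 1 \<union> Dp 2)"
    using finite_popset by (subst card_Un_disjoint) (auto simp: popset_def)
  finally have same_card: "card (C1_of c (card (Dp 1) + card (Dp 2))) = card (Dp 1 \<union> Dp 2)" .
  have "finite (Dp 1 \<union> Dp 2)" using finite_popset by simp
  from card_subset_eq[OF this sub same_card] show ?thesis .
qed

lemma phase3_value:
  assumes "card (Dp 1) + card (Dp 2) \<le> r" "r < card D"
  shows "split_value (C1_of c r)
    = G.objective (card (Dp 1)) (card (Dp 2)) (real (r - card (Dp 1) - card (Dp 2)))"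
proof -
  have C: "C1_of c r \<subseteq> D" "card (C1_of c r) = r" using run_C1_subset_card[OF run, of r] assms by auto
  have "Dp 1 \<union> Dp 2 \<subseteq> C1_of c r" using C1_of_mono[OF assms(1), of c] unfolding C1_after_phase2 .
  note counts = pop_counts_supset_popsets[OF this C(1)]
  have "1 \<le> r" using assms card_popset_pos[of 1] by simp
  from split_value_run[OF run this assms(2)] show ?thesis unfolding counts C(2) .
qed

lemma phase3_value_decreasing:
  assumes "card (Dp 1) + card (Dp 2) \<le> r" "r + 1 \<le> card D - 1"
  shows "split_value (C1_of c (r + 1)) < split_value (C1_of c r)"
proof -
  define m where "m = r - card (Dp 1) - card (Dp 2)"
  have "split_value (C1_of c r) = G.objective (card (Dp 1)) (card (Dp 2)) m"
    using phase3_value[of r] assms unfolding m_def by simp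
  moreover have "r + 1 - card (Dp 1) - card (Dp 2) = Suc m" using assms unfolding m_def by simp
  then have "split_value (C1_of c (r + 1)) = G.objective (card (Dp 1)) (card (Dp 2)) (real m + 1)"
    using phase3_value[of "r + 1"] assms by (simp add: add.commute)
  moreover have "real m + 1 < real (card (Dp 3))" using assms card_data unfolding m_def by simp
  ultimately show ?thesis
    using G.objective_pop3_decreasing[OF G.g33_pos[OF delta_nonneg], of m] by simp
qed

end

end

theorem BS_star_three_populations:
  "(\<forall>x \<in> Dp 1. maximizes_at D (dw_star k pop X D) {} x \<longleftrightarrow> G.g22 \<le> G.g11 \<and> G.g33 \<le> G.g11) \<and>
   (\<forall>c. BS_star_run D (dw_star k pop X D) c \<and> G.g22 \<le> G.g11 \<and> G.g33 \<le> G.g11 \<and> c 1 \<in> Dp 1 \<longrightarrow>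
      (\<forall>r \<in> {1..card (Dp 1)}. c r \<in> Dp 1) \<and>
      (\<forall>r \<in> {1..<card (Dp 1)}. split_value (C1_of c r) < split_value (C1_of c (Suc r))) \<and>
      (\<forall>x \<in> Dp 2. maximizes_at D (dw_star k pop X D) (C1_of c (card (Dp 1))) x \<longleftrightarrow> 0 \<le> G.delta) \<and>
      (0 \<le> G.delta \<and> c (card (Dp 1) + 1) \<in> Dp 2 \<longrightarrow>
        (\<forall>r \<in> {card (Dp 1) + 1..card (Dp 1) + card (Dp 2)}. c r \<in> Dp 2) \<and>
        (\<forall>r. card (Dp 1) < r \<and> r < card (Dp 1) + card (Dp 2) \<longrightarrow>
           2 * split_value (C1_of c r) \<le> split_value (C1_of c (r - 1)) + split_value (C1_of c (r + 1))) \<and>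
        (\<forall>r. card (Dp 1) + card (Dp 2) \<le> r \<and> r + 1 \<le> card D - 1 \<longrightarrow>
           split_value (C1_of c (r + 1)) < split_value (C1_of c r))))"
proof (intro conjI allI impI ballI)
  show "maximizes_at D (dw_star k pop X D) {} x \<longleftrightarrow> G.g22 \<le> G.g11 \<and> G.g33 \<le> G.g11" if "x \<in> Dp 1" for x
    using that by (rule first_step_maximizer_iff)
  fix c
  assume "BS_star_run D (dw_star k pop X D) c \<and> G.g22 \<le> G.g11 \<and> G.g33 \<le> G.g11 \<and> c 1 \<in> Dp 1"
  then have phase1: "BS_star_run D (dw_star k pop X D) c" "G.g22 \<le> G.g11" "G.g33 \<le> G.g11" "c 1 \<in> Dp 1"
    by simp_all
  show "c r \<in> Dp 1" if "r \<in> {1..card (Dp 1)}" for r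
    using phase1_C1_subset[OF phase1, of r] C1_of_last[of r c] that by auto
  show "split_value (C1_of c r) < split_value (C1_of c (Suc r))" if "r \<in> {1..<card (Dp 1)}" for r
    using phase1_value_increasing[OF phase1, of r] that by simp
  show "maximizes_at D (dw_star k pop X D) (C1_of c (card (Dp 1))) x \<longleftrightarrow> 0 \<le> G.delta"
    if "x \<in> Dp 2" for x
    using phase2_start_maximizer_iff[OF phase1 that] .
  assume "0 \<le> G.delta \<and> c (card (Dp 1) + 1) \<in> Dp 2"
  then have phase2: "0 \<le> G.delta" "c (card (Dp 1) + 1) \<in> Dp 2" by simp_all
  show "c r \<in> Dp 2" if "r \<in> {card (Dp 1) + 1..card (Dp 1) + card (Dp 2)}" for r
    using phase2_pop2[OF phase1 phase2, of r] that by simp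
  show "2 * split_value (C1_of c r) \<le> split_value (C1_of c (r - 1)) + split_value (C1_of c (r + 1))"
    if "card (Dp 1) < r \<and> r < card (Dp 1) + card (Dp 2)" for r
    using phase2_value_convex[OF phase1 phase2, of r] that by simp
  show "split_value (C1_of c (r + 1)) < split_value (C1_of c r)"
    if "card (Dp 1) + card (Dp 2) \<le> r \<and> r + 1 \<le> card D - 1" for r
    using phase3_value_decreasing[OF phase1 phase2, of r] that by simp
qed

end

theorem lemma2:
  fixes k :: "'a::{metric_space, second_countable_topology} \<Rightarrow> 'a \<Rightarrow> real"
    and D :: "'o set" and pop :: "'o \<Rightarrow> nat" and X :: "'o \<Rightarrow> 'a"
    and n1 n2 n3 :: nat and d12 d13 d23 :: real
  defines "D1 \<equiv> popset pop D 1" and "D2 \<equiv> popset pop D 2" and "D3 \<equiv> popset pop D 3"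
  defines "dw \<equiv> dw_star k pop X D"
  assumes char: "characteristic_kernel k"
    and finD: "finite D"
    and pops: "\<forall>ob \<in> D. pop ob \<in> {1, 2, 3}"
    and n1_def: "n1 = card D1" and n2_def: "n2 = card D2" and n3_def: "n3 = card D3"
    and ne: "n1 \<ge> 1" "n2 \<ge> 1" "n3 \<ge> 1"
    and distinct: "emp_pmf X D1 \<noteq> emp_pmf X D2" "emp_pmf X D1 \<noteq> emp_pmf X D3"
                  "emp_pmf X D2 \<noteq> emp_pmf X D3"
    and d12_def: "d12 = mmd2 k (measure_pmf (emp_pmf X D1)) (measure_pmf (emp_pmf X D2))"
    and d13_def: "d13 = mmd2 k (measure_pmf (emp_pmf X D1)) (measure_pmf (emp_pmf X D3))"
    and d23_def: "d23 = mmd2 k (measure_pmf (emp_pmf X D2)) (measure_pmf (emp_pmf X D3))"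
  defines "A1 \<equiv> (real n2 - real n1) * d12 + real n3 * (d13 - d23) \<ge> 0"
    and "A2 \<equiv> (real n3 - real n1) * d13 + real n2 * (d12 - d23) \<ge> 0"
    and "A3 \<equiv> real n1 * (real n2 + real n3 - 1) * (d13 - d12)
               + (real n3 - real n2) * (real n1 + 1) * d23 \<ge> 0"
  shows
    \<comment> \<open>(a), first part\<close>
    "(\<forall>x \<in> D1. maximizes_at D dw {} x \<longleftrightarrow> A1 \<and> A2) \<and>
     (\<forall>c. BS_star_run D dw c \<and> A1 \<and> A2 \<and> c 1 \<in> D1 \<longrightarrow>
        \<comment> \<open>(a), second part\<close>
        (\<forall>r \<in> {1..n1}. c r \<in> D1) \<and>
        (\<forall>r \<in> {1..<n1}. dw (C1_of c r) (D - C1_of c r) < dw (C1_of c (Suc r)) (D - C1_of c (Suc r))) \<and>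
        \<comment> \<open>(b), first part\<close>
        (\<forall>x \<in> D2. maximizes_at D dw (C1_of c n1) x \<longleftrightarrow> A3) \<and>
        (A3 \<and> c (n1 + 1) \<in> D2 \<longrightarrow>
          \<comment> \<open>(b), second part\<close>
          (\<forall>r \<in> {n1 + 1..n1 + n2}. c r \<in> D2) \<and>
          (\<forall>r. n1 < r \<and> r < n1 + n2 \<longrightarrow>
             2 * dw (C1_of c r) (D - C1_of c r)
               \<le> dw (C1_of c (r - 1)) (D - C1_of c (r - 1))
                 + dw (C1_of c (r + 1)) (D - C1_of c (r + 1))) \<and>
          \<comment> \<open>(c)\<close>
          (\<forall>r. n1 + n2 \<le> r \<and> r + 1 \<le> card D - 1 \<longrightarrow>
             dw (C1_of c (r + 1)) (D - C1_of c (r + 1)) < dw (C1_of c r) (D - C1_of c r))))"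
proof -
  interpret oracle_three_populations D pop X k
  proof
    show "popset pop D i \<noteq> {}" if "i \<in> {1, 2, 3}" for i
      using that ne card.empty unfolding n1_def n2_def n3_def D1_def D2_def D3_def by fastforce
    show "emp_pmf X (popset pop D i) \<noteq> emp_pmf X (popset pop D j)"
      if "i \<in> {1, 2, 3}" "j \<in> {1, 2, 3}" "i \<noteq> j" for i j
      using that distinct unfolding D1_def D2_def D3_def by auto
  qed (use finD pops char in auto)
  have "A1 \<longleftrightarrow> G.g22 \<le> G.g11" "A2 \<longleftrightarrow> G.g33 \<le> G.g11" "A3 \<longleftrightarrow> 0 \<le> G.delta"
    unfolding A1_def A2_def A3_def n1_def n2_def n3_def d12_def d13_def d23_def D1_def D2_def D3_def
      mmd2_emp_eq_d
    by (fact G.criterion1_iff G.criterion2_iff G.criterion3_iff)+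
  then show ?thesis
    using BS_star_three_populations
    unfolding dw_def D1_def D2_def n1_def n2_def by simp
qed

end
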